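(* In Ruleset A, for any superposition of single Nim heaps whose largest heap has size $k\ge1$, $\langle \mathrm{Nim}(i_1),\ldots,\mathrm{Nim}(i_\ell)\rangle_A\equiv *(k-1)$, where $k=\max_{1\le j\le \ell} i_j$.
   Context: Single-heap Nim: $\mathrm{Nim}(x)$ is a heap of $x$ tokens; classical move $(1,-j)$, $j\ge1$, removes $j$ tokens and is illegal if fewer than $j$ tokens remain. Quantum variation: a position is a nonempty finite set $\langle G_1,\ldots,G_n\rangle$ of classical positions; a classical move is legal if legal in some $G_i$; a Q-move is a nonempty set of legal classical moves $\{m_1,\ldots,m_k\}$, leading to the superposition of all legal results of applying some $m_j$ to some $G_i$. Ruleset A (subscript $A$): only Q-moves consisting of at least two distinct classical moves are allowed. The player with no allowed Q-move loses. $\equiv$ is game equivalence (same outcome in every disjunctive sum), and $*k$ is the value of a classical Nim heap of $k$ tokens ($*0=0$). *)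

theory Defs
  imports Main "HOL-Library.FSet"
begin

inductive win and lose for mv :: "'s \<Rightarrow> 's \<Rightarrow> bool" where
  win_intro: "mv s s' \<Longrightarrow> lose mv s' \<Longrightarrow> win mv s"
| lose_intro: "(\<forall>s'. mv s s' \<longrightarrow> win mv s') \<Longrightarrow> lose mv s"

definition sum_mv :: "('a \<Rightarrow> 'a \<Rightarrow> bool) \<Rightarrow> ('b \<Rightarrow> 'b \<Rightarrow> bool)
    \<Rightarrow> ('a \<times> 'b) \<Rightarrow> ('a \<times> 'b) \<Rightarrow> bool" where
  "sum_mv mA mB p q \<longleftrightarrow>
     (mA (fst p) (fst q) \<and> snd q = snd p) \<or> (fst q = fst p \<and> mB (snd p) (snd q))"

text \<open>All short impartial games, as finite trees of options.\<close>

datatype igame = Game (opts: "igame fset")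

definition igame_mv :: "igame \<Rightarrow> igame \<Rightarrow> bool" where
  "igame_mv G H \<longleftrightarrow> H |\<in>| opts G"

definition game_equiv :: "('a \<Rightarrow> 'a \<Rightarrow> bool) \<Rightarrow> 'a \<Rightarrow> ('b \<Rightarrow> 'b \<Rightarrow> bool) \<Rightarrow> 'b \<Rightarrow> bool" where
  "game_equiv mA a mB b \<longleftrightarrow>
     (\<forall>X :: igame.
        (win (sum_mv mA igame_mv) (a, X) \<longleftrightarrow> win (sum_mv mB igame_mv) (b, X)) \<and>
        (lose (sum_mv mA igame_mv) (a, X) \<longleftrightarrow> lose (sum_mv mB igame_mv) (b, X)))"

text \<open>Nim(x): remove j \<ge> 1 tokens, j \<le> x. The position *k is nim heap k.\<close>

definition nim_mv :: "nat \<Rightarrow> nat \<Rightarrow> bool" where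
  "nim_mv x y \<longleftrightarrow> (\<exists>j. 1 \<le> j \<and> j \<le> x \<and> y = x - j)"

text \<open>A superposition of single Nim heaps \<langle>Nim(i_1),...,Nim(i_l)\<rangle> is represented by
the (finite, nonempty) set of heap sizes.\<close>

definition legal_move :: "nat set \<Rightarrow> nat \<Rightarrow> bool" where
  "legal_move S j \<longleftrightarrow> 1 \<le> j \<and> (\<exists>i\<in>S. j \<le> i)"

definition qmove_result :: "nat set \<Rightarrow> nat set \<Rightarrow> nat set" where
  "qmove_result S M = {i - j | i j. i \<in> S \<and> j \<in> M \<and> j \<le> i}"

definition qnimA_mv :: "nat set \<Rightarrow> nat set \<Rightarrow> bool" where
  "qnimA_mv S T \<longleftrightarrow>
     (\<exists>M. finite M \<and> 2 \<le> card M \<and> (\<forall>j\<in>M. legal_move S j) \<and> T = qmove_result S M)"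

end

theory Submission
  imports Defs
begin

text \<open>Every Ruleset A move with classical moves \<open>M\<close> lowers the largest heap by \<open>Min M\<close>,
and \<open>Min M\<close> is smaller than some other legal move, hence smaller than the largest heap: this
is a Nim move on \<open>Max S - 1\<close>. Conversely, taking \<open>j\<close> tokens from \<open>Max S - 1\<close> is realised
by the Q-move \<open>{j, Max S}\<close>. So "largest heap minus one" is a bisimulation between the two
move relations, and bisimilar positions are equivalent in every disjunctive sum.\<close>

definition bisim :: "('a \<Rightarrow> 'b \<Rightarrow> bool) \<Rightarrow> ('a \<Rightarrow> 'a \<Rightarrow> bool) \<Rightarrow> ('b \<Rightarrow> 'b \<Rightarrow> bool) \<Rightarrow> bool" where
  "bisim R mA mB \<longleftrightarrow>
     (\<forall>a b a'. R a b \<longrightarrow> mA a a' \<longrightarrow> (\<exists>b'. mB b b' \<and> R a' b')) \<and>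
     (\<forall>a b b'. R a b \<longrightarrow> mB b b' \<longrightarrow> (\<exists>a'. mA a a' \<and> R a' b'))"

lemma bisim_conversep: "bisim R mA mB \<Longrightarrow> bisim R\<inverse>\<inverse> mB mA"
  unfolding bisim_def by blast

lemma win_lose_bisim:
  assumes "bisim R mA mB"
  shows "win mA a \<Longrightarrow> R a b \<Longrightarrow> win mB b"
    and "lose mA a \<Longrightarrow> R a b \<Longrightarrow> lose mB b"
proof (induction arbitrary: b and b rule: win_lose.inducts)
  case (win_intro a a')
  then obtain b' where "mB b b'" "R a' b'"
    using assms unfolding bisim_def by blast
  with win_intro.IH show ?case by (blast intro: win_lose.win_intro)
next
  case (lose_intro a)
  show ?case
  proof (rule win_lose.lose_intro, intro allI impI)
    fix b' assume "mB b b'"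
    then obtain a' where "mA a a'" "R a' b'"
      using assms \<open>R a b\<close> unfolding bisim_def by blast
    with lose_intro.IH show "win mB b'" by blast
  qed
qed

lemma bisim_sum_mv:
  assumes "bisim R mA mB"
  shows "bisim (\<lambda>p q. R (fst p) (fst q) \<and> snd p = snd q) (sum_mv mA mC) (sum_mv mB mC)"
  unfolding bisim_def
proof (intro conjI allI impI)
  fix p q p'
  assume "R (fst p) (fst q) \<and> snd p = snd q" and "sum_mv mA mC p p'"
  then show "\<exists>q'. sum_mv mB mC q q' \<and> R (fst p') (fst q') \<and> snd p' = snd q'"
    using assms unfolding bisim_def sum_mv_def
    by (metis fst_conv snd_conv)
next
  fix p q q'
  assume "R (fst p) (fst q) \<and> snd p = snd q" and "sum_mv mB mC q q'"
  then show "\<exists>p'. sum_mv mA mC p p' \<and> R (fst p') (fst q') \<and> snd p' = snd q'"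
    using assms unfolding bisim_def sum_mv_def
    by (metis fst_conv snd_conv)
qed

lemma game_equiv_if_bisim:
  assumes "bisim R mA mB" and "R a b"
  shows "game_equiv mA a mB b"
  unfolding game_equiv_def
proof (intro allI conjI iffI)
  fix X :: igame
  let ?RX = "\<lambda>p q. R (fst p) (fst q) \<and> snd p = snd q"
  let ?RX' = "\<lambda>p q. R\<inverse>\<inverse> (fst p) (fst q) \<and> snd p = snd q"
  have fwd: "bisim ?RX (sum_mv mA igame_mv) (sum_mv mB igame_mv)"
    using assms(1) by (rule bisim_sum_mv)
  have bwd: "bisim ?RX' (sum_mv mB igame_mv) (sum_mv mA igame_mv)"
    using bisim_conversep[OF assms(1)] by (rule bisim_sum_mv)
  have "?RX (a, X) (b, X)" and "?RX' (b, X) (a, X)"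
    using assms(2) by simp_all
  then show "win (sum_mv mA igame_mv) (a, X) \<Longrightarrow> win (sum_mv mB igame_mv) (b, X)"
    and "lose (sum_mv mA igame_mv) (a, X) \<Longrightarrow> lose (sum_mv mB igame_mv) (b, X)"
    and "win (sum_mv mB igame_mv) (b, X) \<Longrightarrow> win (sum_mv mA igame_mv) (a, X)"
    and "lose (sum_mv mB igame_mv) (b, X) \<Longrightarrow> lose (sum_mv mA igame_mv) (a, X)"
    using win_lose_bisim[OF fwd] win_lose_bisim[OF bwd] by blast+
qed

lemma legal_move_le_Max:
  assumes "finite S" and "legal_move S j"
  shows "j \<le> Max S"
  using assms unfolding legal_move_def by (meson Max_ge order.trans)

lemma finite_qmove_result:
  assumes "finite S" and "finite M"
  shows "finite (qmove_result S M)"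
proof -
  have "qmove_result S M \<subseteq> (\<lambda>(i, j). i - j) ` (S \<times> M)"
    unfolding qmove_result_def by auto
  then show ?thesis
    using assms by (meson finite_SigmaI finite_imageI finite_subset)
qed

lemma Max_qmove_result:
  assumes "finite S" "S \<noteq> {}" "finite M" "M \<noteq> {}" "\<forall>j\<in>M. legal_move S j"
  shows "Max S - Min M \<in> qmove_result S M"
    and "Max (qmove_result S M) = Max S - Min M"
proof -
  have "Min M \<in> M"
    using assms(3,4) by simp
  moreover have "Min M \<le> Max S"
    using assms(1,5) \<open>Min M \<in> M\<close> by (simp add: legal_move_le_Max)
  ultimately show mem: "Max S - Min M \<in> qmove_result S M"
    unfolding qmove_result_def using Max_in[OF assms(1,2)] by blast
  have "t \<le> Max S - Min M" if t: "t \<in> qmove_result S M" for t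
  proof -
    obtain i j where "t = i - j" "i \<in> S" "j \<in> M"
      using t unfolding qmove_result_def by blast
    moreover have "i \<le> Max S" and "Min M \<le> j"
      using calculation assms(1,3) by simp_all
    ultimately show ?thesis by linarith
  qed
  then show "Max (qmove_result S M) = Max S - Min M"
    using mem finite_qmove_result[OF assms(1,3)] by (intro antisym Max.boundedI Max_ge) auto
qed

definition below_top :: "nat set \<Rightarrow> nat \<Rightarrow> bool" where
  "below_top S n \<longleftrightarrow> finite S \<and> S \<noteq> {} \<and> n = Max S - 1"

lemma qnimA_mv_simulated_by_nim_mv:
  assumes "below_top S n" and "qnimA_mv S T"
  shows "\<exists>n'. nim_mv n n' \<and> below_top T n'"
proof -
  obtain M where M: "finite M" "2 \<le> card M" "\<forall>j\<in>M. legal_move S j"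
    and T: "T = qmove_result S M"
    using assms(2) unfolding qnimA_mv_def by blast
  have S: "finite S" "S \<noteq> {}" and n: "n = Max S - 1"
    using assms(1) unfolding below_top_def by auto
  have "M \<noteq> {}" using M(2) by auto
  then have "Min M \<in> M" using M(1) by simp
  then have "1 \<le> Min M" using M(3) unfolding legal_move_def by blast
  have "card (M - {Min M}) \<noteq> 0"
    using M(1,2) \<open>Min M \<in> M\<close> by simp
  then obtain j where "j \<in> M" "j \<noteq> Min M"
    using M(1) by (metis Diff_eq_empty_iff card_0_eq finite_Diff subsetI insertCI)
  then have "Min M < j" and "j \<le> Max S"
    using M(1,3) S(1) by (auto simp: le_neq_implies_less legal_move_le_Max)
  moreover have "finite T" "T \<noteq> {}" "Max T = Max S - Min M"
    using T Max_qmove_result[OF S M(1) \<open>M \<noteq> {}\<close> M(3)] finite_qmove_result[OF S(1) M(1)] by auto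
  ultimately have "nim_mv n (Max T - 1) \<and> below_top T (Max T - 1)"
    using n \<open>1 \<le> Min M\<close> unfolding nim_mv_def below_top_def by (auto intro!: exI[of _ "Min M"])
  then show ?thesis ..
qed

lemma nim_mv_simulated_by_qnimA_mv:
  assumes "below_top S n" and "nim_mv n n'"
  shows "\<exists>T. qnimA_mv S T \<and> below_top T n'"
proof -
  have S: "finite S" "S \<noteq> {}" and n: "n = Max S - 1"
    using assms(1) unfolding below_top_def by auto
  obtain j where j: "1 \<le> j" "j \<le> n" "n' = n - j"
    using assms(2) unfolding nim_mv_def by auto
  define M where "M = {j, Max S}"
  have "j < Max S" using j n by linarith
  then have "finite M" "M \<noteq> {}" "2 \<le> card M" "Min M = j"
    unfolding M_def by auto
  moreover have legal: "\<forall>i\<in>M. legal_move S i"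
    unfolding M_def legal_move_def using Max_in[OF S] j \<open>j < Max S\<close>
    by (auto intro!: bexI[of _ "Max S"])
  ultimately have "qnimA_mv S (qmove_result S M)"
    and "below_top (qmove_result S M) n'"
    using Max_qmove_result[OF S _ _ legal] finite_qmove_result[OF S(1)] j n
    unfolding qnimA_mv_def below_top_def by auto
  then show ?thesis by blast
qed

lemma bisim_below_top: "bisim below_top qnimA_mv nim_mv"
  unfolding bisim_def
  using qnimA_mv_simulated_by_nim_mv nim_mv_simulated_by_qnimA_mv by blast

theorem lemma1:
  fixes hs :: "nat list" and k :: nat
  assumes "hs \<noteq> []"
    and "k = Max (set hs)"
    and "1 \<le> k"
  shows "game_equiv qnimA_mv (set hs) nim_mv (k - 1)"
proof (rule game_equiv_if_bisim[OF bisim_below_top])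
  show "below_top (set hs) (k - 1)"
    using assms unfolding below_top_def by simp
qed

end
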